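(* Let $\tau>0$, $\varepsilon\ne0$, $\kappa_{12}\in\mathbb R$. The system on $T^*S^2=\{(\gamma,p)\in\mathbb R^6:\langle\gamma,\gamma\rangle=1,\langle\gamma,p\rangle=0\}$ $$\dot\gamma_1=\tfrac{\varepsilon^2}\tau p_1,\ \dot\gamma_2=\tfrac{\varepsilon^2}\tau p_2,\ \dot\gamma_3=\tfrac{\varepsilon^2}\tau p_3,\quad \dot p_1=\tfrac1\tau\kappa_{12}p_2+\mu\gamma_1,\ \dot p_2=-\tfrac1\tau\kappa_{12}p_1+\mu\gamma_2,\ \dot p_3=\mu\gamma_3,$$ $$\mu=\frac{\kappa_{12}}\tau(p_1\gamma_2-p_2\gamma_1)-\frac{\varepsilon^2}\tau(p_1^2+p_2^2+p_3^2),$$ which is Hamiltonian with Hamiltonian $h=\frac{\varepsilon^2}{2\tau}(p_1^2+p_2^2+p_3^2)$ with respect to the symplectic form $\big(\sum_{i=1}^3dp_i\wedge d\gamma_i+\frac{\kappa_{12}}{\varepsilon^2}d\gamma_1\wedge d\gamma_2\big)|_{T^*S^2}$, is Liouville integrable on $T^*S^2$ with the first integrals $h$ and $$\Phi(\gamma,p)=\gamma_1p_2-\gamma_2p_1+\frac{\kappa_{12}}{2\varepsilon^2}(\gamma_1^2+\gamma_2^2).$$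
   Context: This is the reduced system of the three-dimensional Demchenko case without twisting: a balanced ball with gyroscope, whose inertia operator is proportional to the identity, rolling without slipping and twisting over a fixed sphere, with gyroscopic matrix $\kappa=\kappa_{12}\mathbf e_1\wedge\mathbf e_2$ and $\varepsilon=b/(b\pm a)$. *)

theory Defs
  imports "HOL-Analysis.Analysis"
begin

type_synonym pt = "(real^3) \<times> (real^3)"   (* (gamma, p) in R^6 *)

definition TS2 :: "pt set" where
  "TS2 = {(g, p). g \<bullet> g = 1 \<and> g \<bullet> p = 0}"

text \<open>Tangent space of T*S^2 at x (kernel of the differentials of the constraints).\<close>
definition tangent_TS2 :: "pt \<Rightarrow> pt set" where
  "tangent_TS2 x = {(a, b). fst x \<bullet> a = 0 \<and> a \<bullet> snd x + fst x \<bullet> b = 0}"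

text \<open>The constant 2-form  sum_i dp_i /\ dgamma_i + c dgamma_1 /\ dgamma_2 on R^6
  (with (alpha /\ beta)(u,v) = alpha(u) beta(v) - alpha(v) beta(u)).\<close>
definition omega2 :: "real \<Rightarrow> pt \<Rightarrow> pt \<Rightarrow> real" where
  "omega2 c u v =
     (\<Sum>i\<in>UNIV. snd u $ i * fst v $ i - snd v $ i * fst u $ i)
     + c * (fst u $ 1 * fst v $ 2 - fst v $ 1 * fst u $ 2)"

definition is_ham_vf :: "(pt \<Rightarrow> pt set) \<Rightarrow> (pt \<Rightarrow> pt \<Rightarrow> real) \<Rightarrow> (pt \<Rightarrow> real) \<Rightarrow> pt \<Rightarrow> pt \<Rightarrow> bool" where
  "is_ham_vf T w f x X \<longleftrightarrow>
     X \<in> T x \<and> (\<forall>v\<in>T x. w X v = - frechet_derivative f (at x) v)"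

definition liouville_integrable2 ::
  "pt set \<Rightarrow> (pt \<Rightarrow> pt set) \<Rightarrow> (pt \<Rightarrow> pt \<Rightarrow> real) \<Rightarrow> (pt \<Rightarrow> pt)
     \<Rightarrow> (pt \<Rightarrow> real) \<Rightarrow> (pt \<Rightarrow> real) \<Rightarrow> bool" where
  "liouville_integrable2 M T w V f1 f2 \<longleftrightarrow>
     (\<forall>x\<in>M. \<forall>u\<in>T x. (\<forall>v\<in>T x. w u v = 0) \<longrightarrow> u = 0)
   \<and> (\<forall>x\<in>M. is_ham_vf T w f1 x (V x))
   \<and> (\<forall>x\<in>M. frechet_derivative f1 (at x) (V x) = 0
              \<and> frechet_derivative f2 (at x) (V x) = 0)
   \<and> (\<forall>x\<in>M. \<forall>X1 X2. is_ham_vf T w f1 x X1 \<longrightarrow> is_ham_vf T w f2 x X2 \<longrightarrow> w X1 X2 = 0)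
   \<and> (let S = {x\<in>M. \<forall>a b::real. (\<forall>v\<in>T x. a * frechet_derivative f1 (at x) v
                                          + b * frechet_derivative f2 (at x) v = 0)
                                 \<longrightarrow> a = 0 \<and> b = 0}
      in openin (top_of_set M) S \<and> M \<subseteq> closure S)"

definition demchenko_field :: "real \<Rightarrow> real \<Rightarrow> real \<Rightarrow> pt \<Rightarrow> pt" where
  "demchenko_field \<tau> \<epsilon> k x =
     (let g = fst x; p = snd x;
          \<mu> = k / \<tau> * (p$1 * g$2 - p$2 * g$1) - \<epsilon>^2 / \<tau> * (p$1^2 + p$2^2 + p$3^2)
      in (vector [\<epsilon>^2/\<tau> * p$1, \<epsilon>^2/\<tau> * p$2, \<epsilon>^2/\<tau> * p$3],
          vector [1/\<tau> * k * p$2 + \<mu> * g$1, - 1/\<tau> * k * p$1 + \<mu> * g$2, \<mu> * g$3]))"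

definition demchenko_h :: "real \<Rightarrow> real \<Rightarrow> pt \<Rightarrow> real" where
  "demchenko_h \<tau> \<epsilon> x = \<epsilon>^2 / (2*\<tau>) * ((snd x)$1^2 + (snd x)$2^2 + (snd x)$3^2)"

definition demchenko_Phi :: "real \<Rightarrow> real \<Rightarrow> pt \<Rightarrow> real" where
  "demchenko_Phi \<epsilon> k x = (fst x)$1 * (snd x)$2 - (fst x)$2 * (snd x)$1
      + k / (2 * \<epsilon>^2) * ((fst x)$1^2 + (fst x)$2^2)"

end

theory Submission
  imports Defs
begin

(* The field is the Hamiltonian vector field of the kinetic energy h for the magnetic form
   omega2 (kappa12/eps^2), so h is conserved; Phi, the angular momentum about e3 corrected by
   the magnetic potential, is conserved by direct computation. Since omega2 is nondegenerate on
   every tangent space of T*S^2, Hamiltonian vector fields are unique, hence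
   {h, Phi} = dPhi(X_h) = 0. The differentials of h and Phi are dependent exactly on a closed
   subset of T*S^2 cut out by polynomial equations in (gamma, p), and through every point of
   T*S^2 passes a line inside its fibre meeting that subset in at most three points, so the
   complement is open and dense. *)

lemma inner_vec3: "(a::real^3) \<bullet> b = a$1 * b$1 + a$2 * b$2 + a$3 * b$3"
  by (simp add: inner_vec_def sum_3)

lemma has_derivative_fst_nth [derivative_intros]:
  "((\<lambda>x. fst x $ i) has_derivative (\<lambda>v. fst v $ i)) F"
  and has_derivative_snd_nth [derivative_intros]:
  "((\<lambda>x. snd x $ i) has_derivative (\<lambda>v. snd v $ i)) F"
  by (auto intro!: bounded_linear_imp_has_derivative
      bounded_linear_compose[OF bounded_linear_vec_nth] bounded_linear_fst bounded_linear_snd)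

lemma vec3_eq_iff: "(a::real^3) = b \<longleftrightarrow> a$1 = b$1 \<and> a$2 = b$2 \<and> a$3 = b$3"
  by (simp add: vec_eq_iff forall_3)

lemma is_ham_vf_unique:
  assumes nondeg: "\<forall>u\<in>T x. (\<forall>v\<in>T x. w u v = 0) \<longrightarrow> u = 0"
    and diff_left: "\<And>u u' v. w (u - u') v = w u v - w u' v"
    and diff_closed: "\<And>u u'. u \<in> T x \<Longrightarrow> u' \<in> T x \<Longrightarrow> u - u' \<in> T x"
    and "is_ham_vf T w f x X" "is_ham_vf T w f x Y"
  shows "X = Y"
proof -
  have "X - Y \<in> T x" "\<forall>v\<in>T x. w (X - Y) v = 0"
    using assms(4,5) diff_closed by (auto simp: is_ham_vf_def diff_left)
  then show ?thesis using nondeg by auto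
qed

lemma is_ham_vf_pairing:
  assumes "\<And>u v. w u v = - w v u" "is_ham_vf T w f x Y" "X \<in> T x"
  shows "w X Y = frechet_derivative f (at x) X"
proof -
  have "w Y X = - frechet_derivative f (at x) X"
    using assms(2,3) by (simp add: is_ham_vf_def)
  then show ?thesis using assms(1)[of X Y] by simp
qed

lemma is_ham_vf_conserved:
  assumes "\<And>u v. w u v = - w v u" "is_ham_vf T w f x X"
  shows "frechet_derivative f (at x) X = 0"
proof -
  have "w X X = frechet_derivative f (at x) X"
    using is_ham_vf_pairing[OF assms] assms(2) by (simp add: is_ham_vf_def)
  moreover have "w X X = 0"
    using assms(1)[of X X] by simp
  ultimately show ?thesis by simp
qed

lemma is_ham_vf_involution:
  assumes nondeg: "\<forall>u\<in>T x. (\<forall>v\<in>T x. w u v = 0) \<longrightarrow> u = 0"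
    and diff_left: "\<And>u u' v. w (u - u') v = w u v - w u' v"
    and diff_closed: "\<And>u u'. u \<in> T x \<Longrightarrow> u' \<in> T x \<Longrightarrow> u - u' \<in> T x"
    and skew: "\<And>u v. w u v = - w v u"
    and V: "is_ham_vf T w f x V" "frechet_derivative g (at x) V = 0"
    and X: "is_ham_vf T w f x X" "is_ham_vf T w g x Y"
  shows "w X Y = 0"
proof -
  have "X = V"
    using is_ham_vf_unique[OF nondeg diff_left diff_closed X(1) V(1)] .
  then show ?thesis
    using is_ham_vf_pairing[OF skew X(2)] V X(1) by (simp add: is_ham_vf_def)
qed

lemma finite_line_preimage:
  fixes a w b :: "'a::real_vector"
  assumes "w \<noteq> 0"
  shows "finite {t::real. a + t *\<^sub>R w = b}"
proof -
  have "inj (\<lambda>t::real. a + t *\<^sub>R w)"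
    using assms by (intro injI) (simp add: scaleR_cancel_right)
  then have "finite ((\<lambda>t. a + t *\<^sub>R w) -` {b})"
    by (intro finite_vimageI) auto
  then show ?thesis
    by (simp add: vimage_def)
qed

lemma in_closure_if_line_cofinite:
  fixes x w :: "'a::real_normed_vector"
  assumes "\<And>t. x + t *\<^sub>R w \<in> M" "finite {t. \<not> P (x + t *\<^sub>R w)}"
  shows "x \<in> closure {y\<in>M. P y}"
  unfolding closure_approachable
proof (intro allI impI)
  fix e :: real assume "e > 0"
  define d where "d = e / (norm w + 1)"
  have "norm w + 1 > 0"
    by (simp add: add_nonneg_pos)
  then have "d > 0" "d * norm w < e"
    using \<open>e > 0\<close> by (simp_all add: d_def field_simps)
  then have "infinite ({0<..<d} - {t. \<not> P (x + t *\<^sub>R w)})"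
    using Diff_infinite_finite[OF assms(2)] infinite_Ioo by blast
  then obtain t where "t \<in> {0<..<d} - {t. \<not> P (x + t *\<^sub>R w)}"
    using infinite_imp_nonempty by blast
  then have t: "0 < t" "t < d" "P (x + t *\<^sub>R w)"
    by auto
  have "dist (x + t *\<^sub>R w) x = t * norm w"
    using t by (simp add: dist_norm)
  also have "\<dots> \<le> d * norm w"
    using t by (simp add: mult_right_mono)
  also have "\<dots> < e"
    by fact
  finally show "\<exists>y\<in>{y\<in>M. P y}. dist y x < e"
    using t assms(1) by blast
qed

lemma planar_orthogonal_eq_rotation:
  fixes g1 g2 p1 p2 c :: real
  assumes "g1*p1 + g2*p2 = 0" "p1*p1 + p2*p2 \<noteq> 0" "p1*p1 + p2*p2 = c * (p1*g2 - p2*g1)"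
  shows "p1 = c * g2 \<and> p2 = - c * g1"
proof -
  define m where "m = p1*g2 - p2*g1"
  have lagrange: "(p1*p1 + p2*p2) * (g1*g1 + g2*g2) = m * m"
    using assms(1) unfolding m_def by algebra
  have "m \<noteq> 0"
    using assms(2,3) m_def by auto
  moreover have "m * (c * (g1*g1 + g2*g2)) = m * m"
    using lagrange assms(3) m_def by (simp add: ac_simps)
  ultimately have "c * (g1*g1 + g2*g2) = m"
    by simp
  then have "(p1 - c*g2) * (p1 - c*g2) + (p2 + c*g1) * (p2 + c*g1) = 0"
    using assms(3) unfolding m_def by algebra
  then show ?thesis
    by (simp add: sum_squares_eq_zero_iff)
qed

lemma TS2_iff:
  "(g, p) \<in> TS2 \<longleftrightarrow> g$1*g$1 + g$2*g$2 + g$3*g$3 = 1 \<and> g$1*p$1 + g$2*p$2 + g$3*p$3 = 0"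
  by (simp add: TS2_def inner_vec3)

lemma tangent_TS2_iff:
  "(a, b) \<in> tangent_TS2 (g, p) \<longleftrightarrow> g$1*a$1 + g$2*a$2 + g$3*a$3 = 0
     \<and> a$1*p$1 + a$2*p$2 + a$3*p$3 + (g$1*b$1 + g$2*b$2 + g$3*b$3) = 0"
  by (simp add: tangent_TS2_def inner_vec3)

lemma frechet_derivative_demchenko_h:
  "frechet_derivative (demchenko_h \<tau> \<epsilon>) (at x) = (\<lambda>v. \<epsilon>^2/\<tau> * (snd x \<bullet> snd v))"
proof -
  have "demchenko_h \<tau> \<epsilon> = (\<lambda>x. \<epsilon>^2/(2*\<tau>) * (snd x \<bullet> snd x))"
    by (simp add: fun_eq_iff demchenko_h_def inner_vec3 power2_eq_square)
  moreover have "((\<lambda>x. \<epsilon>^2/(2*\<tau>) * (snd x \<bullet> snd x)) has_derivative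
      (\<lambda>v. \<epsilon>^2/(2*\<tau>) * (snd x \<bullet> snd v + snd v \<bullet> snd x))) (at x)"
    by (intro has_derivative_mult_right has_derivative_inner has_derivative_snd has_derivative_ident)
  ultimately have "(demchenko_h \<tau> \<epsilon> has_derivative (\<lambda>v. \<epsilon>^2/\<tau> * (snd x \<bullet> snd v))) (at x)"
    by (auto elim: has_derivative_eq_rhs simp: inner_commute)
  then show ?thesis
    by (rule frechet_derivative_at[symmetric])
qed

lemma frechet_derivative_demchenko_Phi:
  "frechet_derivative (demchenko_Phi \<epsilon> k) (at x) =
     (\<lambda>v. fst v$1 * snd x$2 + fst x$1 * snd v$2 - fst v$2 * snd x$1 - fst x$2 * snd v$1
        + k/\<epsilon>^2 * (fst x$1 * fst v$1 + fst x$2 * fst v$2))"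
proof -
  \<comment> \<open>Naming the coefficient keeps the derivative rules from asking for \<open>\<epsilon> \<noteq> 0\<close>.\<close>
  define c where "c = k / (2 * \<epsilon>^2)"
  have "demchenko_Phi \<epsilon> k =
      (\<lambda>x. fst x$1 * snd x$2 - fst x$2 * snd x$1 + c * (fst x$1 * fst x$1 + fst x$2 * fst x$2))"
    by (simp add: fun_eq_iff demchenko_Phi_def c_def power2_eq_square)
  moreover have "((\<lambda>x. fst x$1 * snd x$2 - fst x$2 * snd x$1 + c * (fst x$1 * fst x$1 + fst x$2 * fst x$2))
     has_derivative (\<lambda>v. fst v$1 * snd x$2 + fst x$1 * snd v$2 - fst v$2 * snd x$1 - fst x$2 * snd v$1
        + 2 * c * (fst x$1 * fst v$1 + fst x$2 * fst v$2))) (at x)"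
    by (rule has_derivative_eq_rhs, (rule derivative_intros)+) (simp add: fun_eq_iff algebra_simps)
  moreover have "2 * c = k / \<epsilon>^2"
    by (simp add: c_def)
  ultimately have "(demchenko_Phi \<epsilon> k has_derivative
     (\<lambda>v. fst v$1 * snd x$2 + fst x$1 * snd v$2 - fst v$2 * snd x$1 - fst x$2 * snd v$1
        + k/\<epsilon>^2 * (fst x$1 * fst v$1 + fst x$2 * fst v$2))) (at x)"
    by simp
  then show ?thesis
    by (rule frechet_derivative_at[symmetric])
qed

lemma omega2_eq:
  "omega2 c u v = snd u \<bullet> fst v - snd v \<bullet> fst u + c * (fst u$1 * fst v$2 - fst v$1 * fst u$2)"
  by (simp add: omega2_def inner_vec_def sum_subtractf)

lemma omega2_skew: "omega2 c u v = - omega2 c v u"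
  unfolding omega2_eq by (simp add: algebra_simps)

lemma omega2_diff_left: "omega2 c (u - u') v = omega2 c u v - omega2 c u' v"
  unfolding omega2_eq by (simp add: algebra_simps inner_diff_left inner_diff_right)

lemma tangent_TS2_diff:
  "u \<in> tangent_TS2 x \<Longrightarrow> u' \<in> tangent_TS2 x \<Longrightarrow> u - u' \<in> tangent_TS2 x"
  by (cases u; cases u') (simp add: tangent_TS2_def inner_diff_left inner_diff_right)

lemma omega2_nondegenerate:
  assumes "x \<in> TS2" "u \<in> tangent_TS2 x" "\<forall>v\<in>tangent_TS2 x. omega2 c u v = 0"
  shows "u = 0"
proof -
  obtain g p where x: "x = (g, p)" by (cases x)
  obtain a b where u: "u = (a, b)" by (cases u)
  from assms have g: "g \<bullet> g = 1" "g \<bullet> p = 0" and ab: "g \<bullet> a = 0" "a \<bullet> p + g \<bullet> b = 0"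
    by (auto simp: x u TS2_def tangent_TS2_def)
  have "(0, a - (a \<bullet> g) *\<^sub>R g) \<in> tangent_TS2 x"
    using g by (simp add: x tangent_TS2_def inner_diff_right inner_commute)
  then have "omega2 c u (0, a - (a \<bullet> g) *\<^sub>R g) = 0"
    using assms(3) by blast
  then have a: "a = 0"
    using ab by (simp add: omega2_eq u inner_diff_right inner_commute)
  define b' where "b' = b - (b \<bullet> g) *\<^sub>R g"
  have "(b', - (b' \<bullet> p) *\<^sub>R g) \<in> tangent_TS2 x"
    using g by (simp add: x tangent_TS2_def b'_def inner_diff_right inner_diff_left inner_commute)
  then have "omega2 c u (b', - (b' \<bullet> p) *\<^sub>R g) = 0"
    using assms(3) by blast
  then have "b = 0"
    using ab a by (simp add: omega2_eq u b'_def inner_diff_right inner_commute)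
  with a show ?thesis by (simp add: u zero_prod_def)
qed

lemma demchenko_field_is_ham_vf:
  assumes "\<epsilon> \<noteq> 0" "x \<in> TS2"
  shows "is_ham_vf tangent_TS2 (omega2 (k/\<epsilon>^2)) (demchenko_h \<tau> \<epsilon>) x (demchenko_field \<tau> \<epsilon> k x)"
proof -
  obtain g p where x: "x = (g, p)" by (cases x)
  have gg: "g$1*g$1 + g$2*g$2 + g$3*g$3 = 1" and gp: "g$1*p$1 + g$2*p$2 + g$3*p$3 = 0"
    using assms(2) by (auto simp: x TS2_iff)
  have "demchenko_field \<tau> \<epsilon> k x \<in> tangent_TS2 x"
    unfolding x demchenko_field_def Let_def tangent_TS2_iff
    using gp gg by (simp only: vector_3 fst_conv snd_conv) algebra
  moreover have "omega2 (k/\<epsilon>^2) (demchenko_field \<tau> \<epsilon> k x) v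
      = - frechet_derivative (demchenko_h \<tau> \<epsilon>) (at x) v"
    if "v \<in> tangent_TS2 x" for v
  proof -
    obtain a b where v: "v = (a, b)" by (cases v)
    have ga: "g$1*a$1 + g$2*a$2 + g$3*a$3 = 0"
      using that by (simp add: x v tangent_TS2_iff)
    have "\<epsilon>^2 * inverse (\<epsilon>^2) = 1"
      using assms(1) by simp
    then show ?thesis
      unfolding omega2_eq frechet_derivative_demchenko_h x v demchenko_field_def Let_def inner_vec3
      using ga by (simp only: vector_3 fst_conv snd_conv) algebra
  qed
  ultimately show ?thesis by (simp add: is_ham_vf_def)
qed

lemma demchenko_Phi_conserved:
  assumes "\<epsilon> \<noteq> 0"
  shows "frechet_derivative (demchenko_Phi \<epsilon> k) (at x) (demchenko_field \<tau> \<epsilon> k x) = 0"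
proof -
  obtain g p where x: "x = (g, p)" by (cases x)
  have "\<epsilon>^2 * inverse (\<epsilon>^2) = 1"
    using assms by simp
  then show ?thesis
    unfolding frechet_derivative_demchenko_Phi x demchenko_field_def Let_def
    by (simp only: vector_3 fst_conv snd_conv) algebra
qed

definition differentials_independent ::
    "('a::real_normed_vector \<Rightarrow> 'a set) \<Rightarrow> ('a \<Rightarrow> real) \<Rightarrow> ('a \<Rightarrow> real) \<Rightarrow> 'a \<Rightarrow> bool" where
  "differentials_independent T f g x \<longleftrightarrow>
     (\<forall>a b::real. (\<forall>v\<in>T x. a * frechet_derivative f (at x) v + b * frechet_derivative g (at x) v = 0)
        \<longrightarrow> a = 0 \<and> b = 0)"

(* The complement of the zero section p = 0, where dh vanishes, and of the two loci where dPhi is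
   a multiple of dh on the tangent space: gamma3 = p3 = 0 and p = c (gamma2, -gamma1, 0). *)
definition demchenko_regular :: "real \<Rightarrow> pt \<Rightarrow> bool" where
  "demchenko_regular c x \<longleftrightarrow>
     (snd x$1 \<noteq> 0 \<or> snd x$2 \<noteq> 0 \<or> snd x$3 \<noteq> 0) \<and> (fst x$3 \<noteq> 0 \<or> snd x$3 \<noteq> 0)
     \<and> (snd x$1 \<noteq> c * fst x$2 \<or> snd x$2 \<noteq> - c * fst x$1 \<or> snd x$3 \<noteq> 0)"

lemma demchenko_regular_iff:
  "demchenko_regular c (g, p) \<longleftrightarrow>
     p \<noteq> 0 \<and> (g$3 \<noteq> 0 \<or> p$3 \<noteq> 0) \<and> p \<noteq> vector [c * g$2, - c * g$1, 0]"
  by (auto simp: demchenko_regular_def vec3_eq_iff)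

lemma demchenko_derivatives_along_cross:
  assumes "(g, p) \<in> TS2"
  shows "frechet_derivative (demchenko_h \<tau> \<epsilon>) (at (g, p)) (0, cross3 g p) = 0"
    and "frechet_derivative (demchenko_Phi \<epsilon> k) (at (g, p)) (0, cross3 g p) = - p$3"
    and "frechet_derivative (demchenko_h \<tau> \<epsilon>) (at (g, p)) (cross3 p g, 0) = 0"
    and "p$3 = 0 \<Longrightarrow> frechet_derivative (demchenko_Phi \<epsilon> k) (at (g, p)) (cross3 p g, 0)
           = g$3 * (p$1*p$1 + p$2*p$2 - k/\<epsilon>^2 * (p$1*g$2 - p$2*g$1))"
proof -
  have gg: "g$1*g$1 + g$2*g$2 + g$3*g$3 = 1" and gp: "g$1*p$1 + g$2*p$2 + g$3*p$3 = 0"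
    using assms by (auto simp: TS2_iff)
  show "frechet_derivative (demchenko_h \<tau> \<epsilon>) (at (g, p)) (0, cross3 g p) = 0"
    "frechet_derivative (demchenko_h \<tau> \<epsilon>) (at (g, p)) (cross3 p g, 0) = 0"
    by (simp_all add: frechet_derivative_demchenko_h dot_cross_self)
  show "frechet_derivative (demchenko_Phi \<epsilon> k) (at (g, p)) (0, cross3 g p) = - p$3"
    using gg gp unfolding frechet_derivative_demchenko_Phi
    by (simp only: fst_conv snd_conv zero_index cross_components) algebra
  show "frechet_derivative (demchenko_Phi \<epsilon> k) (at (g, p)) (cross3 p g, 0)
      = g$3 * (p$1*p$1 + p$2*p$2 - k/\<epsilon>^2 * (p$1*g$2 - p$2*g$1))" if "p$3 = 0"
    using that unfolding frechet_derivative_demchenko_Phi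
    by (simp add: cross_components algebra_simps)
qed

lemma demchenko_regular_imp_independent:
  assumes "\<epsilon> \<noteq> 0" "\<tau> > 0" "(g, p) \<in> TS2" "demchenko_regular (k/\<epsilon>^2) (g, p)"
  shows "differentials_independent tangent_TS2 (demchenko_h \<tau> \<epsilon>) (demchenko_Phi \<epsilon> k) (g, p)"
  unfolding differentials_independent_def
proof (intro allI impI)
  fix a b :: real
  let ?dh = "frechet_derivative (demchenko_h \<tau> \<epsilon>) (at (g, p))"
  let ?dPhi = "frechet_derivative (demchenko_Phi \<epsilon> k) (at (g, p))"
  assume dep: "\<forall>v\<in>tangent_TS2 (g, p). a * ?dh v + b * ?dPhi v = 0"
  have gp: "g$1*p$1 + g$2*p$2 + g$3*p$3 = 0"
    using assms(3) by (simp add: TS2_iff)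
  have reg: "p \<noteq> 0" "g$3 \<noteq> 0 \<or> p$3 \<noteq> 0" "\<not> (p$1 = k/\<epsilon>^2 * g$2 \<and> p$2 = - (k/\<epsilon>^2) * g$1 \<and> p$3 = 0)"
    using assms(4) by (auto simp: demchenko_regular_iff demchenko_regular_def)
  have "(0, cross3 g p) \<in> tangent_TS2 (g, p)" "(cross3 p g, 0) \<in> tangent_TS2 (g, p)"
    "(0, p) \<in> tangent_TS2 (g, p)"
    using assms(3) by (auto simp: TS2_def tangent_TS2_def dot_cross_self inner_commute)
  then have "a * ?dh (0, cross3 g p) + b * ?dPhi (0, cross3 g p) = 0"
    and cross_p_g: "a * ?dh (cross3 p g, 0) + b * ?dPhi (cross3 p g, 0) = 0"
    and radial: "a * ?dh (0, p) + b * ?dPhi (0, p) = 0"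
    using dep by blast+
  then have "b * p$3 = 0"
    using demchenko_derivatives_along_cross(1,2)[OF assms(3)] by simp
  have b: "b = 0"
  proof (cases "p$3 = 0")
    case False
    with \<open>b * p$3 = 0\<close> show ?thesis by simp
  next
    case True
    have "p$1*p$1 + p$2*p$2 \<noteq> 0"
      using reg(1) True by (auto simp: vec3_eq_iff sum_squares_eq_zero_iff)
    then have "p$1*p$1 + p$2*p$2 \<noteq> k/\<epsilon>^2 * (p$1*g$2 - p$2*g$1)"
      using planar_orthogonal_eq_rotation[of "g$1" "p$1" "g$2" "p$2" "k/\<epsilon>^2"] gp reg(3) True
      by (auto simp only: add_0_right mult_zero_right)
    then show ?thesis
      using cross_p_g demchenko_derivatives_along_cross(3)[OF assms(3)]
        demchenko_derivatives_along_cross(4)[OF assms(3) True] reg(2) True by simp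
  qed
  have "a * (\<epsilon>^2/\<tau> * (p \<bullet> p)) = 0"
    using radial b by (simp add: frechet_derivative_demchenko_h)
  then have "a = 0"
    using assms(1,2) reg(1) by simp
  with b show "a = 0 \<and> b = 0" by simp
qed

lemma demchenko_singular_imp_dependent:
  assumes "(g, p) \<in> TS2" "\<not> demchenko_regular (k/\<epsilon>^2) (g, p)"
  shows "\<not> differentials_independent tangent_TS2 (demchenko_h \<tau> \<epsilon>) (demchenko_Phi \<epsilon> k) (g, p)"
proof -
  have gg: "g$1*g$1 + g$2*g$2 + g$3*g$3 = 1" and gp: "g$1*p$1 + g$2*p$2 + g$3*p$3 = 0"
    using assms(1) by (auto simp: TS2_iff)
  consider "p = 0" | "g$3 = 0" "p$3 = 0" | "p$1 = k/\<epsilon>^2 * g$2" "p$2 = - (k/\<epsilon>^2) * g$1" "p$3 = 0"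
    using assms(2) by (auto simp: demchenko_regular_def vec3_eq_iff)
  then obtain b where "\<forall>v\<in>tangent_TS2 (g, p). frechet_derivative (demchenko_h \<tau> \<epsilon>) (at (g, p)) v
                       + b * frechet_derivative (demchenko_Phi \<epsilon> k) (at (g, p)) v = 0"
  proof cases
    case 1
    then show ?thesis
      by (intro that[of 0]) (simp add: frechet_derivative_demchenko_h)
  next
    case 2
    show ?thesis
    proof (intro that[of "\<epsilon>^2/\<tau> * (p$1*g$2 - p$2*g$1)"] ballI)
      fix v assume v: "v \<in> tangent_TS2 (g, p)"
      obtain u w where v_eq: "v = (u, w)" by (cases v)
      have "g$1*u$1 + g$2*u$2 + g$3*u$3 = 0"
        using v by (simp add: v_eq tangent_TS2_iff)
      with gg gp 2 show "frechet_derivative (demchenko_h \<tau> \<epsilon>) (at (g, p)) v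
          + \<epsilon>^2/\<tau> * (p$1*g$2 - p$2*g$1) * frechet_derivative (demchenko_Phi \<epsilon> k) (at (g, p)) v = 0"
        unfolding frechet_derivative_demchenko_h frechet_derivative_demchenko_Phi v_eq inner_vec3
        by (simp only: fst_conv snd_conv) algebra
    qed
  next
    case 3
    show ?thesis
    proof (intro that[of "\<epsilon>^2/\<tau> * (k/\<epsilon>^2)"] ballI)
      fix v
      from 3 show "frechet_derivative (demchenko_h \<tau> \<epsilon>) (at (g, p)) v
          + \<epsilon>^2/\<tau> * (k/\<epsilon>^2) * frechet_derivative (demchenko_Phi \<epsilon> k) (at (g, p)) v = 0"
        unfolding frechet_derivative_demchenko_h frechet_derivative_demchenko_Phi inner_vec3
        by (simp add: algebra_simps)
    qed
  qed
  then show ?thesis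
    unfolding differentials_independent_def by (metis mult_1 zero_neq_one)
qed

lemma differentials_independent_demchenko_iff:
  assumes "\<epsilon> \<noteq> 0" "\<tau> > 0" "x \<in> TS2"
  shows "differentials_independent tangent_TS2 (demchenko_h \<tau> \<epsilon>) (demchenko_Phi \<epsilon> k) x
           \<longleftrightarrow> demchenko_regular (k/\<epsilon>^2) x"
  using demchenko_regular_imp_independent[OF assms(1,2)] demchenko_singular_imp_dependent assms(3)
  by (cases x) blast

lemma open_demchenko_regular: "open {x. demchenko_regular c x}"
  unfolding demchenko_regular_def
  by (intro open_Collect_conj open_Collect_disj open_Collect_neq continuous_intros)

lemma TS2_subset_closure_demchenko_regular: "TS2 \<subseteq> closure {x\<in>TS2. demchenko_regular c x}"
proof
  fix x assume "x \<in> TS2"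
  obtain g p where x: "x = (g, p)" by (cases x)
  have gp: "g \<bullet> p = 0"
    using \<open>x \<in> TS2\<close> by (simp add: x TS2_def)
  \<comment> \<open>\<open>w \<perp> g\<close>, and \<open>w$3 \<noteq> 0\<close> whenever the line could otherwise stay in the locus \<open>g$3 = p$3 = 0\<close>.\<close>
  define w :: "real^3" where "w = (if g$3 = 0 then axis 3 1 else vector [g$3, 0, - g$1])"
  have w: "w \<noteq> 0" "g \<bullet> w = 0" "g$3 = 0 \<Longrightarrow> w$3 = 1"
    by (auto simp: w_def vec3_eq_iff inner_vec3 axis_def)
  have line: "x + t *\<^sub>R (0, w) = (g, p + t *\<^sub>R w)" for t
    by (simp add: x)
  have "x + t *\<^sub>R (0, w) \<in> TS2" for t
    using \<open>x \<in> TS2\<close> gp w(2) by (simp add: line x TS2_def inner_add_right)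
  moreover have "finite {t. \<not> demchenko_regular c (x + t *\<^sub>R (0, w))}"
  proof (rule finite_subset)
    show "{t. \<not> demchenko_regular c (x + t *\<^sub>R (0, w))} \<subseteq>
        {t. p + t *\<^sub>R w = 0} \<union> {t. g$3 = 0 \<and> p$3 + t *\<^sub>R w$3 = 0}
        \<union> {t. p + t *\<^sub>R w = vector [c * g$2, - c * g$1, 0]}"
      unfolding line by (auto simp: demchenko_regular_iff)
    have "finite {t. g$3 = 0 \<and> p$3 + t *\<^sub>R w$3 = 0}"
      using finite_line_preimage[of "w$3" "p$3" 0] w(3) by (cases "g$3 = 0") simp_all
    then show "finite ({t. p + t *\<^sub>R w = 0} \<union> {t. g$3 = 0 \<and> p$3 + t *\<^sub>R w$3 = 0}
        \<union> {t. p + t *\<^sub>R w = vector [c * g$2, - c * g$1, 0]})"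
      using finite_line_preimage[OF w(1)] by blast
  qed
  ultimately show "x \<in> closure {x\<in>TS2. demchenko_regular c x}"
    by (rule in_closure_if_line_cofinite)
qed

theorem theorem9p3:
  fixes \<tau> \<epsilon> \<kappa>12 :: real
  assumes "\<tau> > 0" and "\<epsilon> \<noteq> 0"
  shows "liouville_integrable2 TS2 tangent_TS2 (omega2 (\<kappa>12 / \<epsilon>^2))
           (demchenko_field \<tau> \<epsilon> \<kappa>12) (demchenko_h \<tau> \<epsilon>) (demchenko_Phi \<epsilon> \<kappa>12)"
proof -
  let ?w = "omega2 (\<kappa>12 / \<epsilon>^2)" and ?V = "demchenko_field \<tau> \<epsilon> \<kappa>12"
  let ?h = "demchenko_h \<tau> \<epsilon>" and ?Phi = "demchenko_Phi \<epsilon> \<kappa>12"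
  have nondeg: "\<forall>x\<in>TS2. \<forall>u\<in>tangent_TS2 x. (\<forall>v\<in>tangent_TS2 x. ?w u v = 0) \<longrightarrow> u = 0"
    using omega2_nondegenerate by blast
  have ham: "\<forall>x\<in>TS2. is_ham_vf tangent_TS2 ?w ?h x (?V x)"
    using demchenko_field_is_ham_vf assms(2) by blast
  have integrals: "\<forall>x\<in>TS2. frechet_derivative ?h (at x) (?V x) = 0
                          \<and> frechet_derivative ?Phi (at x) (?V x) = 0"
    using is_ham_vf_conserved[where w = ?w, OF omega2_skew] ham demchenko_Phi_conserved assms(2) by blast
  have "?w X1 X2 = 0"
    if "x \<in> TS2" "is_ham_vf tangent_TS2 ?w ?h x X1" "is_ham_vf tangent_TS2 ?w ?Phi x X2" for x X1 X2
    using that nondeg ham integrals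
    by (intro is_ham_vf_involution[of tangent_TS2 x ?w ?h "?V x" ?Phi X1 X2]
        omega2_diff_left tangent_TS2_diff omega2_skew) auto
  moreover have "{x\<in>TS2. differentials_independent tangent_TS2 ?h ?Phi x}
                   = {x\<in>TS2. demchenko_regular (\<kappa>12 / \<epsilon>^2) x}"
    using differentials_independent_demchenko_iff[OF assms(2,1)] by blast
  moreover have "openin (top_of_set TS2) {x\<in>TS2. demchenko_regular (\<kappa>12 / \<epsilon>^2) x}"
    using openin_open_Int[OF open_demchenko_regular] by (simp add: Int_def)
  ultimately show ?thesis
    unfolding liouville_integrable2_def Let_def differentials_independent_def[symmetric]
    using nondeg ham integrals TS2_subset_closure_demchenko_regular by auto
qed

end
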